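(* Let $P$ be an Eulerian poset of rank $d$ and $P^*$ its dual Eulerian poset. Then $$B(P;u,v)=(-u)^dB(P^*;u^{-1},v).$$
   Context: An Eulerian poset is a finite poset $P$ with least element $\hat0$, greatest element $\hat1$, all maximal chains of the same length $d$ (the rank), rank function $\rho(x)$ = length of any saturated chain from $\hat0$ to $x$, such that the Möbius function satisfies $\mu_P(x,y)=(-1)^{\rho(y)-\rho(x)}$ for $x\le y$. Intervals $[x,y]=\{z:x\le z\le y\}$ are Eulerian of rank $\rho(y)-\rho(x)$; the dual poset $P^*$ (reversed order) is Eulerian of rank $d$ with rank function $d-\rho$. Define $G(P,t),H(P,t)\in\mathbb{Z}[t]$ recursively: $G=H=1$ if $d=0$; for $d>0$, $H(P,t)=\sum_{\hat0<x\le\hat1}(t-1)^{\rho(x)-1}G([x,\hat1],t)$ and $G(P,t)=\tau_{<d/2}((1-t)H(P,t))$, where $\tau_{<r}(\sum a_it^i)=\sum_{i<r}a_it^i$. Define $B(P;u,v)\in\mathbb{Z}[u,v]$ recursively: $B(P;u,v)=1$ if $d=0$, and for $d>0$ by $\sum_{\hat0\le x\le\hat1}B([\hat0,x];u,v)u^{d-\rho(x)}G([x,\hat1],u^{-1}v)=G(P,uv)$ (the term $x=\hat1$ being $B(P;u,v)$). *)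

theory Defs
  imports Complex_Main "HOL-Computational_Algebra.Polynomial"
begin

text \<open>A finite poset is given by a carrier set S and an order relation le on it.
  Intervals and the dual poset are again of this form (same element type).\<close>

definition finite_poset :: "'a set \<Rightarrow> ('a \<Rightarrow> 'a \<Rightarrow> bool) \<Rightarrow> bool" where
  "finite_poset S le \<longleftrightarrow> finite S \<and>
     (\<forall>x\<in>S. le x x) \<and>
     (\<forall>x\<in>S. \<forall>y\<in>S. le x y \<and> le y x \<longrightarrow> x = y) \<and>
     (\<forall>x\<in>S. \<forall>y\<in>S. \<forall>z\<in>S. le x y \<and> le y z \<longrightarrow> le x z)"

definition dual_rel :: "('a \<Rightarrow> 'a \<Rightarrow> bool) \<Rightarrow> 'a \<Rightarrow> 'a \<Rightarrow> bool" where
  "dual_rel le = (\<lambda>x y. le y x)"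

definition interval :: "'a set \<Rightarrow> ('a \<Rightarrow> 'a \<Rightarrow> bool) \<Rightarrow> 'a \<Rightarrow> 'a \<Rightarrow> 'a set" where
  "interval S le a b = {z \<in> S. le a z \<and> le z b}"

definition pbot :: "'a set \<Rightarrow> ('a \<Rightarrow> 'a \<Rightarrow> bool) \<Rightarrow> 'a" where
  "pbot S le = (THE x. x \<in> S \<and> (\<forall>y\<in>S. le x y))"

definition ptop :: "'a set \<Rightarrow> ('a \<Rightarrow> 'a \<Rightarrow> bool) \<Rightarrow> 'a" where
  "ptop S le = (THE x. x \<in> S \<and> (\<forall>y\<in>S. le y x))"

definition is_chain :: "'a set \<Rightarrow> ('a \<Rightarrow> 'a \<Rightarrow> bool) \<Rightarrow> 'a set \<Rightarrow> bool" where
  "is_chain S le C \<longleftrightarrow> C \<subseteq> S \<and> (\<forall>a\<in>C. \<forall>b\<in>C. le a b \<or> le b a)"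

definition is_maxchain :: "'a set \<Rightarrow> ('a \<Rightarrow> 'a \<Rightarrow> bool) \<Rightarrow> 'a set \<Rightarrow> bool" where
  "is_maxchain S le C \<longleftrightarrow> is_chain S le C \<and> (\<forall>D. is_chain S le D \<and> C \<subseteq> D \<longrightarrow> D = C)"

definition rho :: "'a set \<Rightarrow> ('a \<Rightarrow> 'a \<Rightarrow> bool) \<Rightarrow> 'a \<Rightarrow> nat" where
  "rho S le x = card (SOME C. is_maxchain (interval S le (pbot S le) x) le C) - 1"

definition prank :: "'a set \<Rightarrow> ('a \<Rightarrow> 'a \<Rightarrow> bool) \<Rightarrow> nat" where
  "prank S le = rho S le (ptop S le)"

text \<open>Moebius function, by the usual recursion
  mu(x,x)=1, mu(x,y) = - sum over x<=z<y of mu(x,z); the fuel (card S) exceeds the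
  length of every chain.\<close>
fun mob_aux :: "nat \<Rightarrow> 'a set \<Rightarrow> ('a \<Rightarrow> 'a \<Rightarrow> bool) \<Rightarrow> 'a \<Rightarrow> 'a \<Rightarrow> int" where
  "mob_aux 0 S le x y = (if x = y then 1 else 0)"
| "mob_aux (Suc n) S le x y =
     (if x = y then 1
      else if le x y then - (\<Sum>z\<in>{z\<in>S. le x z \<and> le z y \<and> z \<noteq> y}. mob_aux n S le x z)
      else 0)"

definition mobius :: "'a set \<Rightarrow> ('a \<Rightarrow> 'a \<Rightarrow> bool) \<Rightarrow> 'a \<Rightarrow> 'a \<Rightarrow> int" where
  "mobius S le x y = mob_aux (card S) S le x y"

definition eulerian :: "'a set \<Rightarrow> ('a \<Rightarrow> 'a \<Rightarrow> bool) \<Rightarrow> bool" where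
  "eulerian S le \<longleftrightarrow> finite_poset S le \<and>
     (\<exists>z\<in>S. \<forall>y\<in>S. le z y) \<and>
     (\<exists>z\<in>S. \<forall>y\<in>S. le y z) \<and>
     (\<forall>C D. is_maxchain S le C \<and> is_maxchain S le D \<longrightarrow> card C = card D) \<and>
     (\<forall>x\<in>S. \<forall>y\<in>S. le x y \<longrightarrow> mobius S le x y = (-1) ^ (rho S le y - rho S le x))"

text \<open>Truncation tau_{<d/2}: keep the coefficients a_i with i < d/2, i.e. 2i < d.\<close>
definition tau_half :: "nat \<Rightarrow> int poly \<Rightarrow> int poly" where
  "tau_half d p = (\<Sum>i\<in>{i. 2 * i < d}. monom (coeff p i) i)"

definition H_sum :: "('a set \<Rightarrow> int poly) \<Rightarrow> 'a set \<Rightarrow> ('a \<Rightarrow> 'a \<Rightarrow> bool) \<Rightarrow> int poly" where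
  "H_sum g S le = (\<Sum>x\<in>{x\<in>S. x \<noteq> pbot S le}.
       [:-1, 1:] ^ (rho S le x - 1) * g (interval S le x (ptop S le)))"

primrec G_aux :: "nat \<Rightarrow> 'a set \<Rightarrow> ('a \<Rightarrow> 'a \<Rightarrow> bool) \<Rightarrow> int poly" where
  "G_aux 0 S le = 1"
| "G_aux (Suc n) S le =
     (if prank S le = 0 then 1
      else tau_half (prank S le) ([:1, -1:] * H_sum (\<lambda>T. G_aux n T le) S le))"

definition G_poly :: "'a set \<Rightarrow> ('a \<Rightarrow> 'a \<Rightarrow> bool) \<Rightarrow> int poly" where
  "G_poly S le = G_aux (card S) S le"

definition H_poly :: "'a set \<Rightarrow> ('a \<Rightarrow> 'a \<Rightarrow> bool) \<Rightarrow> int poly" where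
  "H_poly S le = (if prank S le = 0 then 1 else H_sum (\<lambda>T. G_poly T le) S le)"

text \<open>B(P;u,v), represented by its values at real u, v.  The recursion
  sum_{x} B([0,x];u,v) u^(d-rho x) G([x,1], v/u) = G(P,uv) is solved for the x = 1 term.
  It is the polynomial B(P;u,v) evaluated at (u,v) whenever u \<noteq> 0.\<close>
primrec B_aux :: "nat \<Rightarrow> 'a set \<Rightarrow> ('a \<Rightarrow> 'a \<Rightarrow> bool) \<Rightarrow> real \<Rightarrow> real \<Rightarrow> real" where
  "B_aux 0 S le u v = 1"
| "B_aux (Suc n) S le u v =
     (if prank S le = 0 then 1
      else poly (map_poly of_int (G_poly S le)) (u * v)
         - (\<Sum>x\<in>{x\<in>S. x \<noteq> ptop S le}.
              B_aux n (interval S le (pbot S le) x) le u v * u ^ (prank S le - rho S le x)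
              * poly (map_poly of_int (G_poly (interval S le x (ptop S le)) le)) (v / u)))"

definition B_val :: "'a set \<Rightarrow> ('a \<Rightarrow> 'a \<Rightarrow> bool) \<Rightarrow> real \<Rightarrow> real \<Rightarrow> real" where
  "B_val S le u v = B_aux (card S) S le u v"

end

theory Submission
  imports Defs
begin

(* In an Eulerian poset the alternating sums of (-1)^rho over nontrivial intervals vanish.
   This yields Stanley's symmetry t^rho(x,y) G([x,y], 1/t) = sum_z (t-1)^rho(x,z) G([z,y], t)
   for P and for its dual, and from these two the inversion formula
   sum_z (-1)^rho(x,z) G([x,z]^*, t) G([z,y], t) = delta(x,y): the left side is invariant under
   reversal in degree rho(x,y), yet has degree below rho(x,y)/2.
   The recursion defining B is unitriangular, so B is its unique solution. Multiplying the
   recursion by the inversion kernel at uv and exchanging the order of summation turns it into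
   the recursion for B(P^*; 1/u, v); hence (-u)^rho(x,y) B([x,y]^*; 1/u, v) solves the
   recursion for B([x,y]; u, v). *)

section \<open>Reversal and truncation of polynomials\<close>

definition reverse_poly :: "nat \<Rightarrow> 'a::comm_ring_1 poly \<Rightarrow> 'a poly" where
  "reverse_poly d p = (\<Sum>i\<le>d. monom (coeff p i) (d - i))"

lemma coeff_reverse_poly:
  "coeff (reverse_poly d p) n = (if n \<le> d then coeff p (d - n) else 0)"
proof -
  have "coeff (reverse_poly d p) n = (\<Sum>i\<le>d. if i = d - n \<and> n \<le> d then coeff p i else 0)"
    unfolding reverse_poly_def coeff_sum coeff_monom by (intro sum.cong) auto
  then show ?thesis
    by (simp add: sum.delta')
qed

lemma reverse_poly_sum: "reverse_poly d (sum f A) = (\<Sum>x\<in>A. reverse_poly d (f x))"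
proof -
  have "reverse_poly d (p + q) = reverse_poly d p + reverse_poly d q" for p q :: "'a poly"
    by (rule poly_eqI) (simp add: coeff_reverse_poly)
  then show ?thesis
    by (induction A rule: infinite_finite_induct) (simp_all add: reverse_poly_def)
qed

lemma reverse_poly_uminus: "reverse_poly d (- p) = - reverse_poly d p"
  by (rule poly_eqI) (simp add: coeff_reverse_poly)

lemma reverse_poly_minus_one_power_mult: "reverse_poly d ((-1) ^ k * p) = (-1) ^ k * reverse_poly d p"
  by (cases "even k") (simp_all add: reverse_poly_uminus)

lemma reverse_poly_eq_reflect_poly:
  assumes "degree p \<le> d"
  shows "reverse_poly d p = monom 1 (d - degree p) * reflect_poly p"
  using assms
  by (intro poly_eqI)
    (auto simp: coeff_reverse_poly coeff_monom_mult coeff_reflect_poly intro!: coeff_eq_0)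

lemma reverse_poly_mult:
  fixes p q :: "'a::idom poly"
  assumes "degree p \<le> a" "degree q \<le> b"
  shows "reverse_poly (a + b) (p * q) = reverse_poly a p * reverse_poly b q"
proof (cases "p = 0 \<or> q = 0")
  case True
  then show ?thesis
    by (auto simp: reverse_poly_def)
next
  case False
  then have "degree (p * q) = degree p + degree q"
    by (simp add: degree_mult_eq)
  with assms show ?thesis
    by (simp add: reverse_poly_eq_reflect_poly degree_mult_le reflect_poly_mult mult_monom algebra_simps)
qed

lemma reverse_poly_x_minus_one_power:
  "reverse_poly k ([:-1, 1:] ^ k) = (-1) ^ k * ([:-1, 1:] ^ k :: 'a::idom poly)"
proof (induction k)
  case 0
  then show ?case
    by (simp add: reverse_poly_def)
next
  case (Suc k)
  let ?K = "[:-1, 1:] :: 'a poly"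
  have "degree (?K ^ k) \<le> k" "degree ?K \<le> 1"
    using degree_power_le[of ?K k] by simp_all
  then have "reverse_poly (Suc k) (?K ^ k * ?K) = reverse_poly k (?K ^ k) * reverse_poly 1 ?K"
    by (simp only: Suc_eq_plus1 reverse_poly_mult)
  moreover have "reverse_poly 1 ?K = - ?K"
    by (rule poly_eqI) (auto simp: coeff_reverse_poly coeff_pCons split: nat.split)
  ultimately show ?case
    using Suc by (simp only: power_Suc2 mult_minus1_right mult_minus_left mult_minus_right mult.assoc mult_1_left)
qed

lemma coeff_tau_half: "coeff (tau_half d p) n = (if 2 * n < d then coeff p n else 0)"
proof -
  have "finite {i::nat. 2 * i < d}"
    by (rule finite_subset[of _ "{..<d}"]) auto
  then show ?thesis
    by (simp add: tau_half_def coeff_sum coeff_monom eq_commute sum.delta')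
qed

text \<open>If the reversal of \<open>p\<close> is \<open>-p\<close>, the coefficients of \<open>p\<close> above the middle degree are
  determined by those below it, and the middle coefficient vanishes.\<close>

lemma reverse_poly_tau_half:
  assumes "degree p \<le> d" "reverse_poly d p = - p"
  shows "reverse_poly d (tau_half d p) = tau_half d p - p"
proof (rule poly_eqI)
  fix n
  have antisym: "coeff p (d - k) = - coeff p k" if "k \<le> d" for k
    using arg_cong[OF assms(2), of "\<lambda>q. coeff q k"] that by (simp add: coeff_reverse_poly)
  show "coeff (reverse_poly d (tau_half d p)) n = coeff (tau_half d p - p) n"
  proof (cases "n \<le> d")
    case True
    have "coeff p n = 0" if "2 * n = d"
    proof -
      from that have "d - n = n"
        by simp
      with antisym[of n] True show ?thesis
        by simp
    qed
    with True antisym[of n] show ?thesis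
      by (auto simp: coeff_reverse_poly coeff_tau_half)
  next
    case False
    with assms(1) show ?thesis
      by (simp add: coeff_reverse_poly coeff_tau_half coeff_eq_0)
  qed
qed

lemma reverse_poly_fixed_eq_0:
  assumes "reverse_poly d p = p" "2 * degree p < d"
  shows "p = 0"
proof -
  have "coeff p (degree p) = coeff p (d - degree p)"
    using arg_cong[OF assms(1), of "\<lambda>q. coeff q (degree p)"] assms(2)
    by (simp add: coeff_reverse_poly)
  also have "\<dots> = 0"
    using assms(2) by (intro coeff_eq_0) simp
  finally show ?thesis
    by simp
qed

definition ipoly :: "int poly \<Rightarrow> 'a::comm_ring_1 \<Rightarrow> 'a" where
  "ipoly p x = poly (map_poly of_int p) x"

lemma ipoly_add [simp]: "ipoly (p + q) x = ipoly p x + ipoly q x"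
proof -
  have "map_poly of_int (p + q) = map_poly of_int p + (map_poly of_int q :: 'a poly)"
    by (rule poly_eqI) (simp add: coeff_map_poly)
  then show ?thesis
    by (simp add: ipoly_def)
qed

lemma ipoly_mult [simp]: "ipoly (p * q) x = ipoly p x * ipoly q x"
proof -
  have "map_poly of_int (p * q) = map_poly of_int p * (map_poly of_int q :: 'a poly)"
    by (rule poly_eqI) (simp add: coeff_map_poly coeff_mult)
  then show ?thesis
    by (simp add: ipoly_def)
qed

lemma ipoly_0 [simp]: "ipoly 0 x = 0"
  by (simp add: ipoly_def)

lemma ipoly_1 [simp]: "ipoly 1 x = 1"
  by (simp add: ipoly_def)

lemma ipoly_uminus [simp]: "ipoly (- p) x = - ipoly p x"
proof -
  have "map_poly of_int (- p) = - (map_poly of_int p :: 'a poly)"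
    by (rule poly_eqI) (simp add: coeff_map_poly)
  then show ?thesis
    by (simp add: ipoly_def)
qed

lemma ipoly_power [simp]: "ipoly (p ^ n) x = ipoly p x ^ n"
  by (induction n) simp_all

lemma ipoly_sum [simp]: "ipoly (sum f A) x = (\<Sum>a\<in>A. ipoly (f a) x)"
  by (induction A rule: infinite_finite_induct) simp_all

section \<open>Graded posets\<close>

lemma maxchain_exists:
  assumes "finite T" "is_chain T le C"
  shows "\<exists>D. is_maxchain T le D \<and> C \<subseteq> D"
proof -
  have "finite {D. is_chain T le D}"
    by (rule finite_subset[of _ "Pow T"]) (auto simp: is_chain_def assms(1))
  with assms(2) obtain D where "is_chain T le D" "C \<subseteq> D"
    "\<forall>D'\<in>{D. is_chain T le D}. D \<subseteq> D' \<longrightarrow> D = D'"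
    using finite_has_maximal2[of "{D. is_chain T le D}" C] by auto
  then show ?thesis
    unfolding is_maxchain_def by blast
qed

lemma maxchain_insert:
  assumes "is_maxchain T le C" "w \<in> T" "le w w" "\<forall>x\<in>C. le w x \<or> le x w"
  shows "w \<in> C"
proof -
  have "is_chain T le (insert w C)"
    using assms by (auto simp: is_maxchain_def is_chain_def)
  with assms(1) show ?thesis
    unfolding is_maxchain_def by blast
qed

lemma is_maxchain_dual_rel: "is_maxchain T (dual_rel le) C = is_maxchain T le C"
proof -
  have "is_chain T (dual_rel le) = is_chain T le"
    by (auto simp: is_chain_def dual_rel_def)
  then show ?thesis
    by (simp add: is_maxchain_def)
qed

lemma dual_rel_apply: "dual_rel le x y = le y x"
  by (simp add: dual_rel_def)

lemma interval_dual_rel: "interval S (dual_rel le) a b = interval S le b a"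
  by (auto simp: interval_def dual_rel_def)

definition interval_rank :: "'a set \<Rightarrow> ('a \<Rightarrow> 'a \<Rightarrow> bool) \<Rightarrow> 'a \<Rightarrow> 'a \<Rightarrow> nat" where
  "interval_rank S le a b = card (SOME C. is_maxchain (interval S le a b) le C) - 1"

lemma interval_rank_dual_rel: "interval_rank S (dual_rel le) a b = interval_rank S le b a"
  by (simp add: interval_rank_def interval_dual_rel is_maxchain_dual_rel)

lemma rho_eq_interval_rank: "rho S le x = interval_rank S le (pbot S le) x"
  by (simp add: rho_def interval_rank_def)

locale graded_poset =
  fixes S :: "'a set" and le :: "'a \<Rightarrow> 'a \<Rightarrow> bool"
  assumes finite_poset: "finite_poset S le"
    and has_bot: "\<exists>z\<in>S. \<forall>y\<in>S. le z y"
    and has_top: "\<exists>z\<in>S. \<forall>y\<in>S. le y z"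
    and maxchain_card: "is_maxchain S le C \<Longrightarrow> is_maxchain S le D \<Longrightarrow> card C = card D"
begin

abbreviation I :: "'a \<Rightarrow> 'a \<Rightarrow> 'a set" where
  "I a b \<equiv> interval S le a b"

abbreviation rk :: "'a \<Rightarrow> 'a \<Rightarrow> nat" where
  "rk a b \<equiv> interval_rank S le a b"

abbreviation G :: "'a \<Rightarrow> 'a \<Rightarrow> int poly" where
  "G a b \<equiv> G_poly (I a b) le"

abbreviation G_dual :: "'a \<Rightarrow> 'a \<Rightarrow> int poly" where
  "G_dual a b \<equiv> G_poly (I a b) (dual_rel le)"

lemma finite_carrier: "finite S"
  and poset_refl: "x \<in> S \<Longrightarrow> le x x"
  and poset_antisym: "x \<in> S \<Longrightarrow> y \<in> S \<Longrightarrow> le x y \<Longrightarrow> le y x \<Longrightarrow> x = y"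
  and poset_trans: "x \<in> S \<Longrightarrow> y \<in> S \<Longrightarrow> z \<in> S \<Longrightarrow> le x y \<Longrightarrow> le y z \<Longrightarrow> le x z"
  using finite_poset unfolding finite_poset_def by blast+

lemma pbot_least: "pbot S le \<in> S" "y \<in> S \<Longrightarrow> le (pbot S le) y"
proof -
  obtain z where z: "z \<in> S" "\<forall>y\<in>S. le z y"
    using has_bot by blast
  have "pbot S le = z"
    unfolding pbot_def by (rule the_equality) (use z poset_antisym in auto)
  with z show "pbot S le \<in> S" "y \<in> S \<Longrightarrow> le (pbot S le) y"
    by auto
qed

lemma ptop_greatest: "ptop S le \<in> S" "y \<in> S \<Longrightarrow> le y (ptop S le)"
proof -
  obtain z where z: "z \<in> S" "\<forall>y\<in>S. le y z"
    using has_top by blast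
  have "ptop S le = z"
    unfolding ptop_def by (rule the_equality) (use z poset_antisym in auto)
  with z show "ptop S le \<in> S" "y \<in> S \<Longrightarrow> le y (ptop S le)"
    by auto
qed

lemma graded_poset_dual: "graded_poset S (dual_rel le)"
proof
  show "finite_poset S (dual_rel le)"
    using finite_poset unfolding finite_poset_def dual_rel_def by blast
  show "\<exists>z\<in>S. \<forall>y\<in>S. dual_rel le z y" "\<exists>z\<in>S. \<forall>y\<in>S. dual_rel le y z"
    using has_bot has_top by (simp_all add: dual_rel_def)
  show "card C = card D" if "is_maxchain S (dual_rel le) C" "is_maxchain S (dual_rel le) D" for C D
    using that by (intro maxchain_card) (simp_all add: is_maxchain_dual_rel)
qed

lemma mem_interval: "z \<in> I a b \<longleftrightarrow> z \<in> S \<and> le a z \<and> le z b"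
  by (simp add: interval_def)

lemma finite_interval: "finite (I a b)"
  using finite_carrier by (simp add: interval_def)

lemma interval_bot_top: "I (pbot S le) (ptop S le) = S"
  using pbot_least ptop_greatest by (auto simp: interval_def)

lemma interval_refl: "a \<in> S \<Longrightarrow> I a a = {a}"
  using poset_antisym[of _ a] by (auto simp: interval_def poset_refl)

lemma bot_in_interval: "a \<in> S \<Longrightarrow> le a b \<Longrightarrow> a \<in> I a b"
  and top_in_interval: "b \<in> S \<Longrightarrow> le a b \<Longrightarrow> b \<in> I a b"
  by (simp_all add: interval_def poset_refl)

lemma interval_subset_interval:
  assumes "a \<in> S" "b \<in> S" "c \<in> I a b" "d \<in> I a b"
  shows "I c d \<subseteq> I a b"
proof
  fix z
  assume "z \<in> I c d"
  with assms show "z \<in> I a b"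
    using poset_trans[of a c z] poset_trans[of z d b] by (auto simp: interval_def)
qed

lemma card_interval_less:
  assumes "a \<in> S" "b \<in> S" "c \<in> I a b" "d \<in> I a b" "le c d" "c \<noteq> a \<or> d \<noteq> b"
  shows "card (I c d) < card (I a b)"
proof (rule psubset_card_mono[OF finite_interval])
  have "a \<notin> I c d \<or> b \<notin> I c d"
    using assms poset_antisym[of a c] poset_antisym[of d b] by (auto simp: interval_def)
  moreover have "a \<in> I a b" "b \<in> I a b"
    using assms poset_trans[of a c d] poset_trans[of a d b] by (auto simp: interval_def poset_refl)
  ultimately show "I c d \<subset> I a b"
    using interval_subset_interval[OF assms(1-4)] by blast
qed

lemma card_interval_pos: "a \<in> S \<Longrightarrow> le a b \<Longrightarrow> 0 < card (I a b)"
  using bot_in_interval finite_interval card_gt_0_iff by blast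

lemma maxchain_ends:
  assumes "a \<in> S" "b \<in> S" "le a b" "is_maxchain (I a b) le C"
  shows "a \<in> C" "b \<in> C"
proof -
  have "C \<subseteq> I a b"
    using assms(4) by (simp add: is_maxchain_def is_chain_def)
  then have bounds: "\<forall>x\<in>C. le a x \<and> le x b"
    by (auto simp: interval_def)
  show "a \<in> C"
    by (rule maxchain_insert[OF assms(4)]) (use assms bounds in \<open>auto simp: interval_def poset_refl\<close>)
  show "b \<in> C"
    by (rule maxchain_insert[OF assms(4)]) (use assms bounds in \<open>auto simp: interval_def poset_refl\<close>)
qed

lemma maxchain_inter:
  assumes "a \<in> S" "b \<in> S" "c \<in> S" "le a b" "le b c"
    and "is_maxchain (I a b) le C1" "is_maxchain (I b c) le C2"
  shows "C1 \<inter> C2 = {b}"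
proof -
  have "C1 \<subseteq> I a b" "C2 \<subseteq> I b c"
    using assms(6,7) by (simp_all add: is_maxchain_def is_chain_def)
  then have "x = b" if "x \<in> C1" "x \<in> C2" for x
    using that assms(2) poset_antisym[of x b] by (auto simp: interval_def)
  moreover have "b \<in> C1" "b \<in> C2"
    using maxchain_ends(2)[OF assms(1,2,4,6)] maxchain_ends(1)[OF assms(2,3,5,7)] .
  ultimately show ?thesis
    by blast
qed

lemma maxchain_union:
  assumes S: "a \<in> S" "b \<in> S" "c \<in> S" and le: "le a b" "le b c"
    and C1: "is_maxchain (I a b) le C1" and C2: "is_maxchain (I b c) le C2"
  shows "is_maxchain (I a c) le (C1 \<union> C2)"
proof -
  have chain1: "\<forall>x\<in>C1. \<forall>y\<in>C1. le x y \<or> le y x" and chain2: "\<forall>x\<in>C2. \<forall>y\<in>C2. le x y \<or> le y x"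
    using C1 C2 by (simp_all add: is_maxchain_def is_chain_def)
  have below: "x \<in> S \<and> le a x \<and> le x b \<and> le x c" if "x \<in> C1" for x
    using that C1 poset_trans[of x b c] S le by (auto simp: is_maxchain_def is_chain_def interval_def)
  have above: "x \<in> S \<and> le b x \<and> le x c \<and> le a x" if "x \<in> C2" for x
    using that C2 poset_trans[of a b x] S le by (auto simp: is_maxchain_def is_chain_def interval_def)
  have "le x y" if "x \<in> C1" "y \<in> C2" for x y
    using below[OF that(1)] above[OF that(2)] poset_trans[of x b y] S(2) by blast
  then have chain: "is_chain (I a c) le (C1 \<union> C2)"
    using chain1 chain2 below above by (auto simp: is_chain_def interval_def)
  have "D \<subseteq> C1 \<union> C2" if D: "is_chain (I a c) le D" "C1 \<union> C2 \<subseteq> D" for D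
  proof
    fix w
    assume "w \<in> D"
    with D have w: "w \<in> S" "le a w" "le w c" and comparable: "\<forall>x\<in>D. le w x \<or> le x w"
      by (auto simp: is_chain_def interval_def)
    moreover have "b \<in> D"
      using D(2) maxchain_ends(2)[OF S(1,2) le(1) C1] by blast
    ultimately have "le w b \<or> le b w"
      by blast
    then show "w \<in> C1 \<union> C2"
    proof
      assume "le w b"
      then have "w \<in> C1"
        using w comparable D(2) by (intro maxchain_insert[OF C1]) (auto simp: interval_def poset_refl)
      then show ?thesis ..
    next
      assume "le b w"
      then have "w \<in> C2"
        using w comparable D(2) by (intro maxchain_insert[OF C2]) (auto simp: interval_def poset_refl)
      then show ?thesis ..
    qed
  qed
  with chain show ?thesis
    unfolding is_maxchain_def by blast
qed

lemma finite_maxchain: "is_maxchain (I a b) le C \<Longrightarrow> finite C"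
  using finite_interval by (auto simp: is_maxchain_def is_chain_def intro: finite_subset)

lemma maxchain_interval_exists: "\<exists>C. is_maxchain (I a b) le C"
  using maxchain_exists[of "I a b" le "{}"] finite_interval by (auto simp: is_chain_def)

text \<open>A maximal chain of \<open>[a, b]\<close> extends to one of the whole poset by gluing fixed maximal
  chains of \<open>[0, a]\<close> and \<open>[b, 1]\<close>, so gradedness is inherited by intervals.\<close>

lemma card_maxchain_interval:
  assumes "a \<in> S" "b \<in> S" "le a b"
    and C: "is_maxchain (I a b) le C" and C': "is_maxchain (I a b) le C'"
  shows "card C = card C'"
proof -
  let ?z = "pbot S le" and ?o = "ptop S le"
  obtain D where D: "is_maxchain (I ?z a) le D"
    using maxchain_interval_exists by blast
  obtain E where E: "is_maxchain (I b ?o) le E"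
    using maxchain_interval_exists by blast
  have glued: "is_maxchain S le (D \<union> (X \<union> E)) \<and> card (D \<union> (X \<union> E)) + 2 = card D + card X + card E"
    if X: "is_maxchain (I a b) le X" for X
  proof -
    have XE: "is_maxchain (I a ?o) le (X \<union> E)" "X \<inter> E = {b}"
      using maxchain_union[OF assms(1,2) ptop_greatest(1) assms(3) ptop_greatest(2) X E]
        maxchain_inter[OF assms(1,2) ptop_greatest(1) assms(3) ptop_greatest(2) X E] assms(2) by auto
    have DXE: "is_maxchain (I ?z ?o) le (D \<union> (X \<union> E))" "D \<inter> (X \<union> E) = {a}"
      using maxchain_union[OF pbot_least(1) assms(1) ptop_greatest(1) pbot_least(2) ptop_greatest(2) D XE(1)]
        maxchain_inter[OF pbot_least(1) assms(1) ptop_greatest(1) pbot_least(2) ptop_greatest(2) D XE(1)]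
        assms(1) by auto
    have "finite D" "finite X" "finite E"
      using D X E finite_maxchain by blast+
    then show ?thesis
      using DXE XE card_Un_Int[of X E] card_Un_Int[of D "X \<union> E"] interval_bot_top by simp
  qed
  show ?thesis
    using glued[OF C] glued[OF C'] maxchain_card[of "D \<union> (C \<union> E)" "D \<union> (C' \<union> E)"] by simp
qed

lemma card_maxchain_eq_rank:
  assumes "a \<in> S" "b \<in> S" "le a b" "is_maxchain (I a b) le C"
  shows "card C = rk a b + 1"
proof -
  have "is_maxchain (I a b) le (SOME C. is_maxchain (I a b) le C)"
    using maxchain_interval_exists by (rule someI_ex)
  then have "card C = card (SOME C. is_maxchain (I a b) le C)"
    using card_maxchain_interval assms by blast
  moreover have "card C \<noteq> 0"
    using maxchain_ends[OF assms] finite_maxchain[OF assms(4)] by auto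
  ultimately show ?thesis
    by (simp add: interval_rank_def)
qed

lemma rank_add:
  assumes "a \<in> S" "b \<in> S" "c \<in> S" "le a b" "le b c"
  shows "rk a c = rk a b + rk b c"
proof -
  obtain C1 C2 where C1: "is_maxchain (I a b) le C1" and C2: "is_maxchain (I b c) le C2"
    using maxchain_interval_exists by blast
  have "le a c"
    using poset_trans[OF assms] .
  then show ?thesis
    using maxchain_union[OF assms C1 C2] maxchain_inter[OF assms C1 C2]
      card_Un_Int[OF finite_maxchain[OF C1] finite_maxchain[OF C2]]
      card_maxchain_eq_rank[OF assms(1,2,4) C1] card_maxchain_eq_rank[OF assms(2,3,5) C2]
      card_maxchain_eq_rank[OF assms(1,3)] by simp
qed

lemma rank_refl:
  assumes "a \<in> S"
  shows "rk a a = 0"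
proof -
  obtain C where C: "is_maxchain (I a a) le C"
    using maxchain_interval_exists by blast
  then have "C = {a}"
    using maxchain_ends[OF assms assms poset_refl[OF assms] C] interval_refl[OF assms]
    by (auto simp: is_maxchain_def is_chain_def)
  then show ?thesis
    using card_maxchain_eq_rank[OF assms assms poset_refl[OF assms] C] by simp
qed

lemma rank_pos:
  assumes "a \<in> S" "b \<in> S" "le a b" "a \<noteq> b"
  shows "0 < rk a b"
proof -
  obtain C where C: "is_maxchain (I a b) le C"
    using maxchain_interval_exists by blast
  have "card {a, b} \<le> card C"
    using maxchain_ends[OF assms(1-3) C] finite_maxchain[OF C] by (intro card_mono) auto
  then show ?thesis
    using card_maxchain_eq_rank[OF assms(1-3) C] assms(4) by simp
qed

lemma rank_eq_0_iff:
  assumes "a \<in> S" "b \<in> S" "le a b"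
  shows "rk a b = 0 \<longleftrightarrow> a = b"
  by (cases "a = b") (use rank_refl[OF assms(1)] rank_pos[OF assms] in auto)

lemma pbot_interval:
  assumes "a \<in> S" "le a b"
  shows "pbot (I a b) le = a"
  unfolding pbot_def
proof (rule the_equality)
  show "a \<in> I a b \<and> (\<forall>y\<in>I a b. le a y)"
    using assms by (simp add: interval_def poset_refl)
  show "x = a" if "x \<in> I a b \<and> (\<forall>y\<in>I a b. le x y)" for x
    using that bot_in_interval[OF assms] poset_antisym[of x a] assms(1) by (auto simp: interval_def)
qed

lemma ptop_interval:
  assumes "b \<in> S" "le a b"
  shows "ptop (I a b) le = b"
  unfolding ptop_def
proof (rule the_equality)
  show "b \<in> I a b \<and> (\<forall>y\<in>I a b. le y b)"
    using assms by (simp add: interval_def poset_refl)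
  show "x = b" if "x \<in> I a b \<and> (\<forall>y\<in>I a b. le y x)" for x
    using that top_in_interval[OF assms] poset_antisym[of x b] assms(1) by (auto simp: interval_def)
qed

lemma interval_interval:
  assumes "a \<in> S" "b \<in> S" "c \<in> I a b" "d \<in> I a b"
  shows "interval (I a b) le c d = I c d"
  using interval_subset_interval[OF assms] by (auto simp: interval_def)

lemma rho_interval:
  assumes "a \<in> S" "b \<in> S" "le a b" "z \<in> I a b"
  shows "rho (I a b) le z = rk a z"
  using assms by (simp add: rho_def interval_rank_def pbot_interval interval_interval bot_in_interval)

lemma prank_interval:
  assumes "a \<in> S" "b \<in> S" "le a b"
  shows "prank (I a b) le = rk a b"
  using assms by (simp add: prank_def ptop_interval rho_interval top_in_interval)

lemma sum_interval_swap:
  assumes "x \<in> S" "y \<in> S"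
  shows "(\<Sum>z\<in>I x y. \<Sum>w\<in>I z y. f z w) = (\<Sum>w\<in>I x y. \<Sum>z\<in>I x w. f z w)"
proof -
  have upper: "I z y = {w \<in> I x y. le z w}" if "z \<in> I x y" for z
    using that assms poset_trans[of x z] by (auto simp: interval_def)
  have lower: "I x w = {z \<in> I x y. le z w}" if "w \<in> I x y" for w
    using that assms poset_trans[of _ w y] by (auto simp: interval_def)
  have "(\<Sum>z\<in>I x y. \<Sum>w\<in>I z y. f z w) = (\<Sum>z\<in>I x y. \<Sum>w\<in>{w \<in> I x y. le z w}. f z w)"
    using upper by simp
  also have "\<dots> = (\<Sum>w\<in>I x y. \<Sum>z\<in>{z \<in> I x y. le z w}. f z w)"
    by (rule sum.swap_restrict[OF finite_interval finite_interval])
  also have "\<dots> = (\<Sum>w\<in>I x y. \<Sum>z\<in>I x w. f z w)"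
    using lower by simp
  finally show ?thesis .
qed

end


section \<open>Unfolding the recursive definitions on intervals\<close>

context graded_poset
begin

lemma H_sum_interval:
  assumes "a \<in> S" "b \<in> S" "le a b"
  shows "H_sum g (I a b) le = (\<Sum>x\<in>I a b - {a}. [:-1, 1:] ^ (rk a x - 1) * g (I x b))"
proof -
  have "{x \<in> I a b. x \<noteq> a} = I a b - {a}"
    by blast
  moreover have "rho (I a b) le x = rk a x" "interval (I a b) le x b = I x b" if "x \<in> I a b" for x
    using that assms rho_interval interval_interval top_in_interval by auto
  ultimately show ?thesis
    unfolding H_sum_def pbot_interval[OF assms(1,3)] ptop_interval[OF assms(2,3)]
    by (intro sum.cong) auto
qed

lemma G_aux_Suc_interval:
  assumes "a \<in> S" "b \<in> S" "le a b"
  shows "G_aux (Suc n) (I a b) le = (if a = b then 1 else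
    tau_half (rk a b) ([:1, -1:] * (\<Sum>x\<in>I a b - {a}. [:-1, 1:] ^ (rk a x - 1) * G_aux n (I x b) le)))"
  using assms by (simp add: prank_interval rank_eq_0_iff H_sum_interval)

lemma G_aux_fuel:
  assumes "a \<in> S" "b \<in> S" "le a b" "card (I a b) \<le> m" "card (I a b) \<le> n"
  shows "G_aux m (I a b) le = G_aux n (I a b) le"
  using assms
proof (induction m arbitrary: n a)
  case 0
  then show ?case
    using card_interval_pos by fastforce
next
  case (Suc m)
  obtain n' where n: "n = Suc n'"
    using Suc.prems card_interval_pos[of a b] by (cases n) auto
  have "G_aux m (I x b) le = G_aux n' (I x b) le" if "x \<in> I a b - {a}" for x
  proof -
    have "card (I x b) < card (I a b)"
      using that Suc.prems by (intro card_interval_less) (auto simp: interval_def poset_refl)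
    with that Suc.prems n show ?thesis
      by (intro Suc.IH) (auto simp: interval_def)
  qed
  with Suc.prems show ?case
    unfolding n G_aux_Suc_interval[OF Suc.prems(1-3)] by simp
qed

lemma G_poly_singleton: "a \<in> S \<Longrightarrow> G_poly {a} le = 1"
  using G_aux_Suc_interval[of a a] by (simp add: G_poly_def interval_refl poset_refl)

lemma G_poly_rec:
  assumes "a \<in> S" "b \<in> S" "le a b" "a \<noteq> b"
  shows "G a b =
    tau_half (rk a b) (- (\<Sum>x\<in>I a b - {a}. [:-1, 1:] ^ rk a x * G x b))"
proof -
  obtain k where k: "card (I a b) = Suc k"
    using card_interval_pos[OF assms(1,3)] gr0_implies_Suc by blast
  have "[:1, -1:] * ([:-1, 1:] ^ (rk a x - 1) * G_aux k (I x b) le) =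
      - ([:-1, 1:] ^ rk a x * G x b)" if "x \<in> I a b - {a}" for x
  proof -
    from that assms have x: "x \<in> S" "le a x" "le x b" "x \<noteq> a"
      by (auto simp: interval_def)
    then have "card (I x b) \<le> k"
      using k assms by (metis card_interval_less less_Suc_eq_le mem_interval poset_refl)
    then have "G_aux k (I x b) le = G x b"
      unfolding G_poly_def using x assms(2) by (intro G_aux_fuel) auto
    moreover obtain j where "rk a x = Suc j"
      using rank_pos[OF assms(1) x(1,2)] x(4) gr0_implies_Suc by metis
    moreover have "[:1, -1:] = - [:-1, 1 :: int:]"
      by simp
    ultimately show ?thesis
      by (simp only: power_Suc diff_Suc_1 mult_minus_left mult.assoc)
  qed
  then show ?thesis
    unfolding G_poly_def k G_aux_Suc_interval[OF assms(1-3)] sum_distrib_left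
    using assms(4) by (simp add: sum_negf)
qed

lemma B_aux_Suc_interval:
  assumes "a \<in> S" "b \<in> S" "le a b"
  shows "B_aux (Suc n) (I a b) le u v = (if a = b then 1 else ipoly (G a b) (u * v)
    - (\<Sum>x\<in>I a b - {b}. B_aux n (I a x) le u v * u ^ rk x b * ipoly (G x b) (v / u)))"
proof -
  have "prank (I a b) le - rho (I a b) le x = rk x b"
    "interval (I a b) le a x = I a x" "interval (I a b) le x b = I x b" if "x \<in> I a b" for x
    using that assms rank_add[of a x b] prank_interval rho_interval interval_interval
      bot_in_interval top_in_interval by (auto simp: interval_def)
  then have "(\<Sum>x\<in>{x \<in> I a b. x \<noteq> b}. B_aux n (interval (I a b) le a x) le u v
        * u ^ (prank (I a b) le - rho (I a b) le x)
        * poly (map_poly of_int (G_poly (interval (I a b) le x b) le)) (v / u))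
      = (\<Sum>x\<in>I a b - {b}. B_aux n (I a x) le u v * u ^ rk x b * ipoly (G x b) (v / u))"
    by (intro sum.cong) (auto simp: ipoly_def)
  then show ?thesis
    unfolding B_aux.simps pbot_interval[OF assms(1,3)] ptop_interval[OF assms(2,3)]
    using assms by (simp add: prank_interval rank_eq_0_iff ipoly_def)
qed

lemma B_aux_fuel:
  assumes "a \<in> S" "b \<in> S" "le a b" "card (I a b) \<le> m" "card (I a b) \<le> n"
  shows "B_aux m (I a b) le u v = B_aux n (I a b) le u v"
  using assms
proof (induction m arbitrary: n b)
  case 0
  then show ?case
    using card_interval_pos by fastforce
next
  case (Suc m)
  obtain n' where n: "n = Suc n'"
    using Suc.prems card_interval_pos[of a b] by (cases n) auto
  have "B_aux m (I a x) le u v = B_aux n' (I a x) le u v" if "x \<in> I a b - {b}" for x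
  proof -
    have "card (I a x) < card (I a b)"
      using that Suc.prems by (intro card_interval_less) (auto simp: interval_def poset_refl)
    with that Suc.prems n show ?thesis
      by (intro Suc.IH) (auto simp: interval_def)
  qed
  with Suc.prems show ?case
    unfolding n B_aux_Suc_interval[OF Suc.prems(1-3)] by simp
qed

lemma B_val_recursion:
  assumes "a \<in> S" "b \<in> S" "le a b"
  shows "(\<Sum>z\<in>I a b. B_val (I a z) le u v * u ^ rk z b * ipoly (G z b) (v / u))
    = ipoly (G a b) (u * v)"
proof -
  obtain k where k: "card (I a b) = Suc k"
    using card_interval_pos[OF assms(1,3)] gr0_implies_Suc by blast
  have "B_aux k (I a x) le u v = B_val (I a x) le u v" if "x \<in> I a b - {b}" for x
  proof -
    from that assms have x: "x \<in> S" "le a x" "le x b" "x \<noteq> b"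
      by (auto simp: interval_def)
    then have "card (I a x) \<le> k"
      using k assms by (metis card_interval_less less_Suc_eq_le mem_interval poset_refl)
    then show ?thesis
      unfolding B_val_def using x assms(1) by (intro B_aux_fuel) auto
  qed
  then have "a \<noteq> b \<Longrightarrow> B_val (I a b) le u v = ipoly (G a b) (u * v)
    - (\<Sum>x\<in>I a b - {b}. B_val (I a x) le u v * u ^ rk x b * ipoly (G x b) (v / u))"
    unfolding B_val_def k B_aux_Suc_interval[OF assms] by simp
  moreover have "B_val (I a a) le u v = 1"
    using B_aux_Suc_interval[of a a] assms(1) by (simp add: B_val_def interval_refl poset_refl)
  moreover have "(\<Sum>z\<in>I a b. B_val (I a z) le u v * u ^ rk z b * ipoly (G z b) (v / u))
    = B_val (I a b) le u v
      + (\<Sum>z\<in>I a b - {b}. B_val (I a z) le u v * u ^ rk z b * ipoly (G z b) (v / u))"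
    using assms
    by (subst sum.remove[OF finite_interval top_in_interval]) (simp_all add: rank_refl interval_refl G_poly_singleton)
  ultimately show ?thesis
    using assms by (cases "a = b") (simp_all add: interval_refl rank_refl G_poly_singleton)
qed

lemma mob_aux_Suc_interval:
  assumes "le x y"
  shows "mob_aux (Suc n) S le x y = (if x = y then 1 else - (\<Sum>z\<in>I x y - {y}. mob_aux n S le x z))"
proof -
  have "{z \<in> S. le x z \<and> le z y \<and> z \<noteq> y} = I x y - {y}"
    by (auto simp: interval_def)
  with assms show ?thesis
    by simp
qed

lemma mob_aux_fuel:
  assumes "x \<in> S" "y \<in> S" "le x y" "card (I x y) \<le> m" "card (I x y) \<le> n"
  shows "mob_aux m S le x y = mob_aux n S le x y"
  using assms
proof (induction m arbitrary: n y)
  case 0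
  then show ?case
    using card_interval_pos by fastforce
next
  case (Suc m)
  obtain n' where n: "n = Suc n'"
    using Suc.prems card_interval_pos[of x y] by (cases n) auto
  have "mob_aux m S le x z = mob_aux n' S le x z" if "z \<in> I x y - {y}" for z
  proof -
    have "card (I x z) < card (I x y)"
      using that Suc.prems by (intro card_interval_less) (auto simp: interval_def poset_refl)
    with that Suc.prems n show ?thesis
      by (intro Suc.IH) (auto simp: interval_def)
  qed
  with Suc.prems show ?case
    unfolding n mob_aux_Suc_interval[OF Suc.prems(3)] by simp
qed

lemma sum_mobius_interval:
  assumes "x \<in> S" "y \<in> S" "le x y" "x \<noteq> y"
  shows "(\<Sum>z\<in>I x y. mobius S le x z) = 0"
proof -
  have card_S: "card (I x z) \<le> card S" for z
    by (rule card_mono[OF finite_carrier]) (auto simp: interval_def)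
  obtain n where n: "card S = Suc n"
    using card_interval_pos[OF assms(1,3)] card_S[of y] by (cases "card S") auto
  have "mob_aux n S le x z = mobius S le x z" if "z \<in> I x y - {y}" for z
  proof -
    have "card (I x z) < card (I x y)"
      using that assms by (intro card_interval_less) (auto simp: interval_def poset_refl)
    with that assms n card_S[of y] show ?thesis
      unfolding mobius_def by (intro mob_aux_fuel) (auto simp: interval_def)
  qed
  then have "mobius S le x y = - (\<Sum>z\<in>I x y - {y}. mobius S le x z)"
    unfolding mobius_def n mob_aux_Suc_interval[OF assms(3)] using assms(4) by simp
  then show ?thesis
    using assms by (subst sum.remove[OF finite_interval top_in_interval]) simp_all
qed

lemma degree_G_poly_less:
  assumes "a \<in> S" "b \<in> S" "le a b" "a \<noteq> b"
  shows "2 * degree (G a b) < rk a b"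
proof (cases "G a b = 0")
  case True
  then show ?thesis
    using rank_pos[OF assms] by simp
next
  case False
  then have "coeff (G a b) (degree (G a b)) \<noteq> 0"
    by simp
  then show ?thesis
    unfolding G_poly_rec[OF assms] coeff_tau_half by (auto split: if_splits)
qed

lemma degree_G_poly_le:
  assumes "a \<in> S" "b \<in> S" "le a b"
  shows "degree (G a b) \<le> rk a b"
  using assms degree_G_poly_less[OF assms] by (cases "a = b") (auto simp: interval_refl G_poly_singleton)

lemma degree_G_dual_less:
  assumes "a \<in> S" "b \<in> S" "le a b" "a \<noteq> b"
  shows "2 * degree (G_dual a b) < rk a b"
  using graded_poset.degree_G_poly_less[OF graded_poset_dual, of b a] assms
  by (simp add: interval_dual_rel interval_rank_dual_rel dual_rel_apply)

lemma degree_G_dual_le: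
  assumes "a \<in> S" "b \<in> S" "le a b"
  shows "degree (G_dual a b) \<le> rk a b"
  using graded_poset.degree_G_poly_le[OF graded_poset_dual, of b a] assms
  by (simp add: interval_dual_rel interval_rank_dual_rel dual_rel_apply)

lemma degree_x_minus_one_power_mult_G:
  assumes "a \<in> S" "b \<in> S" "z \<in> I a b"
  shows "degree ([:-1, 1:] ^ rk a z * G z b) \<le> rk a b"
proof -
  from assms have z: "z \<in> S" "le a z" "le z b"
    by (auto simp: interval_def)
  have "degree ([:-1, 1:] ^ rk a z * G z b) \<le> rk a z + rk z b"
    using degree_mult_le[of "[:-1, 1:] ^ rk a z" "G z b"] degree_power_le[of "[:-1, 1:] :: int poly" "rk a z"]
      degree_G_poly_le[OF z(1) assms(2) z(3)] by simp
  with z assms show ?thesis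
    using rank_add[of a z b] by simp
qed

lemma reverse_x_minus_one_power_mult_G:
  assumes "a \<in> S" "b \<in> S" "z \<in> I a b"
  shows "reverse_poly (rk a b) ([:-1, 1:] ^ rk a z * G z b)
    = (-1) ^ rk a z * [:-1, 1:] ^ rk a z * reverse_poly (rk z b) (G z b)"
proof -
  from assms have z: "z \<in> S" "le a z" "le z b"
    by (auto simp: interval_def)
  have "degree ([:-1, 1:] ^ rk a z :: int poly) \<le> rk a z"
    using degree_power_le[of "[:-1, 1:] :: int poly" "rk a z"] by simp
  then show ?thesis
    using rank_add[of a z b] z assms degree_G_poly_le[of z b]
    by (simp add: reverse_poly_mult reverse_poly_x_minus_one_power)
qed

end


section \<open>Eulerian posets\<close>

locale eulerian_poset = graded_poset +
  assumes alternating_sum_int: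
    "x \<in> S \<Longrightarrow> y \<in> S \<Longrightarrow> le x y \<Longrightarrow> (\<Sum>z\<in>I x y. (-1::int) ^ rk x z) = (if x = y then 1 else 0)"
begin

lemma alternating_sum:
  assumes "x \<in> S" "y \<in> S" "le x y"
  shows "(\<Sum>z\<in>I x y. (-1::'b::comm_ring_1) ^ rk x z) = (if x = y then 1 else 0)"
  using arg_cong[OF alternating_sum_int[OF assms], of "of_int :: int \<Rightarrow> 'b"] by simp

lemma alternating_sum_upper_sums:
  fixes f :: "'a \<Rightarrow> 'b::comm_ring_1"
  assumes "a \<in> S" "b \<in> S" "le a b"
  shows "(\<Sum>z\<in>I a b. (-1) ^ rk a z * (\<Sum>w\<in>I z b. f w)) = f a"
proof -
  have "(\<Sum>z\<in>I a b. (-1) ^ rk a z * (\<Sum>w\<in>I z b. f w))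
      = (\<Sum>w\<in>I a b. (\<Sum>z\<in>I a w. (-1) ^ rk a z) * f w)"
    unfolding sum_distrib_left sum_distrib_right sum_interval_swap[OF assms(1,2)] ..
  also have "\<dots> = (\<Sum>w\<in>I a b. if a = w then f w else 0)"
    using assms by (intro sum.cong refl) (auto simp: alternating_sum mem_interval)
  also have "\<dots> = f a"
    using assms by (simp add: bot_in_interval finite_interval)
  finally show ?thesis .
qed

lemma eulerian_poset_dual: "eulerian_poset S (dual_rel le)"
proof (intro eulerian_poset.intro graded_poset_dual eulerian_poset_axioms.intro)
  fix x y
  assume "x \<in> S" "y \<in> S" "dual_rel le x y"
  then have xy: "x \<in> S" "y \<in> S" "le y x"
    by (simp_all add: dual_rel_apply)
  have "(-1::int) ^ rk z x = (-1) ^ rk y x * (-1) ^ rk y z" if "z \<in> I y x" for z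
    using that xy rank_add[of y z x] by (simp add: interval_def power_add algebra_simps left_minus_one_mult_self)
  then have "(\<Sum>z\<in>I y x. (-1::int) ^ rk z x) = (-1) ^ rk y x * (\<Sum>z\<in>I y x. (-1) ^ rk y z)"
    by (simp add: sum_distrib_left)
  with xy show "(\<Sum>z\<in>interval S (dual_rel le) x y. (-1::int) ^ interval_rank S (dual_rel le) x z)
      = (if x = y then 1 else 0)"
    by (auto simp: alternating_sum rank_refl interval_dual_rel interval_rank_dual_rel)
qed

lemma reverse_sum_upper_G:
  assumes "a \<in> S" "b \<in> S" "le a b"
    and upper: "\<And>z. z \<in> I a b - {a} \<Longrightarrow>
      reverse_poly (rk z b) (G z b) = (\<Sum>w\<in>I z b. [:-1, 1:] ^ rk z w * G w b)"
  shows "reverse_poly (rk a b) (\<Sum>z\<in>I a b - {a}. [:-1, 1:] ^ rk a z * G z b)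
    = - (\<Sum>z\<in>I a b - {a}. [:-1, 1:] ^ rk a z * G z b)"
proof -
  let ?f = "\<lambda>w. [:-1, 1:] ^ rk a w * G w b"
  have split: "(\<Sum>z\<in>I a b. g z) = g a + (\<Sum>z\<in>I a b - {a}. g z)" for g :: "'a \<Rightarrow> int poly"
    using assms by (intro sum.remove finite_interval bot_in_interval)
  have "reverse_poly (rk a b) (?f z) = (-1) ^ rk a z * (\<Sum>w\<in>I z b. ?f w)" if "z \<in> I a b - {a}" for z
  proof -
    have "rk a w = rk a z + rk z w" if "w \<in> I z b" for w
      using \<open>z \<in> I a b - {a}\<close> that assms rank_add[of a z w] by (simp add: interval_def)
    then show ?thesis
      using that assms upper[OF that]
      by (simp add: reverse_x_minus_one_power_mult_G sum_distrib_left power_add mult.assoc)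
  qed
  then have "reverse_poly (rk a b) (\<Sum>z\<in>I a b - {a}. ?f z)
      = (\<Sum>z\<in>I a b - {a}. (-1) ^ rk a z * (\<Sum>w\<in>I z b. ?f w))"
    unfolding reverse_poly_sum by simp
  also have "\<dots> = (\<Sum>z\<in>I a b. (-1) ^ rk a z * (\<Sum>w\<in>I z b. ?f w)) - (\<Sum>w\<in>I a b. ?f w)"
    using assms by (simp add: split rank_refl)
  also have "\<dots> = - (\<Sum>z\<in>I a b - {a}. ?f z)"
    unfolding alternating_sum_upper_sums[OF assms(1-3)] split[of ?f] by simp
  finally show ?thesis .
qed

lemma reverse_G_poly:
  assumes "a \<in> S" "b \<in> S" "le a b"
  shows "reverse_poly (rk a b) (G a b) = (\<Sum>z\<in>I a b. [:-1, 1:] ^ rk a z * G z b)"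
  using assms
proof (induction "card (I a b)" arbitrary: a rule: less_induct)
  case less
  define q where "q = (\<Sum>z\<in>I a b - {a}. [:-1, 1:] ^ rk a z * G z b)"
  have split: "(\<Sum>z\<in>I a b. [:-1, 1:] ^ rk a z * G z b) = G a b + q"
    using less.prems by (subst sum.remove[OF finite_interval bot_in_interval]) (simp_all add: q_def rank_refl)
  show ?case
  proof (cases "a = b")
    case True
    then show ?thesis
      using less.prems by (simp add: interval_refl rank_refl G_poly_singleton reverse_poly_def)
  next
    case False
    have IH: "reverse_poly (rk z b) (G z b) = (\<Sum>w\<in>I z b. [:-1, 1:] ^ rk z w * G w b)"
      if "z \<in> I a b - {a}" for z
    proof (rule less.hyps)
      show "card (I z b) < card (I a b)"
        using that less.prems by (intro card_interval_less) (auto simp: interval_def poset_refl)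
    qed (use that less.prems in \<open>auto simp: interval_def\<close>)
    have "reverse_poly (rk a b) q = - q"
      unfolding q_def by (rule reverse_sum_upper_G[OF less.prems IH])
    moreover have "degree q \<le> rk a b"
      unfolding q_def using less.prems
      by (intro degree_sum_le) (auto simp: finite_interval degree_x_minus_one_power_mult_G)
    ultimately have "reverse_poly (rk a b) (G a b) = G a b + q"
      using G_poly_rec[OF less.prems False]
      by (simp add: q_def[symmetric] reverse_poly_tau_half reverse_poly_uminus)
    then show ?thesis
      unfolding split .
  qed
qed

lemma reverse_G_dual:
  assumes "a \<in> S" "b \<in> S" "le a b"
  shows "reverse_poly (rk a b) (G_dual a b) = (\<Sum>z\<in>I a b. [:-1, 1:] ^ rk z b * G_dual a z)"
  using eulerian_poset.reverse_G_poly[OF eulerian_poset_dual, of b a] assms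
  by (simp add: interval_dual_rel interval_rank_dual_rel dual_rel_apply)

lemma reverse_G_dual_mult_G:
  assumes "x \<in> S" "y \<in> S" "z \<in> I x y"
  shows "reverse_poly (rk x y) ((-1) ^ rk x z * G_dual x z * G z y) = (\<Sum>w\<in>I x z.
    (-1) ^ rk x w * G_dual x w * ((-1) ^ rk w z * (\<Sum>v\<in>I z y. [:-1, 1:] ^ rk w v * G v y)))"
proof -
  let ?K = "[:-1, 1:] :: int poly"
  from assms have z: "z \<in> S" "le x z" "le z y"
    by (auto simp: interval_def)
  have "reverse_poly (rk x y) ((-1) ^ rk x z * G_dual x z * G z y)
      = (-1) ^ rk x z * (reverse_poly (rk x z) (G_dual x z) * reverse_poly (rk z y) (G z y))"
    using rank_add[OF assms(1) z(1) assms(2) z(2,3)] degree_G_dual_le[OF assms(1) z(1,2)]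
      degree_G_poly_le[OF z(1) assms(2) z(3)]
    by (simp add: mult.assoc reverse_poly_minus_one_power_mult reverse_poly_mult)
  also have "\<dots> = (\<Sum>w\<in>I x z. (-1) ^ rk x z * ?K ^ rk w z * G_dual x w * (\<Sum>v\<in>I z y. ?K ^ rk z v * G v y))"
    unfolding reverse_G_dual[OF assms(1) z(1,2)] reverse_G_poly[OF z(1) assms(2) z(3)]
    by (simp add: sum_distrib_left sum_distrib_right mult_ac)
  also have "\<dots> = (\<Sum>w\<in>I x z.
      (-1) ^ rk x w * G_dual x w * ((-1) ^ rk w z * (\<Sum>v\<in>I z y. ?K ^ rk w v * G v y)))"
  proof (intro sum.cong refl)
    fix w
    assume "w \<in> I x z"
    then have w: "w \<in> S" "le x w" "le w z"
      by (simp_all add: interval_def)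
    have "(\<Sum>v\<in>I z y. ?K ^ rk w v * G v y) = ?K ^ rk w z * (\<Sum>v\<in>I z y. ?K ^ rk z v * G v y)"
      unfolding sum_distrib_left using w z assms rank_add[of w z]
      by (intro sum.cong refl) (simp add: interval_def power_add mult.assoc)
    moreover have "(-1) ^ rk x z = (-1) ^ rk x w * (-1 :: int poly) ^ rk w z"
      using w z assms rank_add[of x w z] by (simp add: power_add)
    ultimately show "(-1) ^ rk x z * ?K ^ rk w z * G_dual x w * (\<Sum>v\<in>I z y. ?K ^ rk z v * G v y)
        = (-1) ^ rk x w * G_dual x w * ((-1) ^ rk w z * (\<Sum>v\<in>I z y. ?K ^ rk w v * G v y))"
      by (simp only: mult_ac)
  qed
  finally show ?thesis .
qed

lemma reverse_sum_G_dual_G: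
  assumes "x \<in> S" "y \<in> S" "le x y"
  shows "reverse_poly (rk x y) (\<Sum>z\<in>I x y. (-1) ^ rk x z * G_dual x z * G z y)
    = (\<Sum>z\<in>I x y. (-1) ^ rk x z * G_dual x z * G z y)"
proof -
  let ?T = "\<lambda>w z. (-1) ^ rk w z * (\<Sum>v\<in>I z y. [:-1, 1:] ^ rk w v * G v y)"
  have "reverse_poly (rk x y) (\<Sum>z\<in>I x y. (-1) ^ rk x z * G_dual x z * G z y)
      = (\<Sum>z\<in>I x y. \<Sum>w\<in>I x z. (-1) ^ rk x w * G_dual x w * ?T w z)"
    unfolding reverse_poly_sum using assms by (simp add: reverse_G_dual_mult_G)
  also have "\<dots> = (\<Sum>w\<in>I x y. (-1) ^ rk x w * G_dual x w * (\<Sum>z\<in>I w y. ?T w z))"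
    unfolding sum_interval_swap[OF assms(1,2), symmetric] sum_distrib_left ..
  also have "\<dots> = (\<Sum>w\<in>I x y. (-1) ^ rk x w * G_dual x w * G w y)"
    using assms by (intro sum.cong refl) (simp add: alternating_sum_upper_sums mem_interval rank_refl)
  finally show ?thesis .
qed

lemma degree_sum_G_dual_G:
  assumes "x \<in> S" "y \<in> S" "le x y" "x \<noteq> y"
  shows "2 * degree (\<Sum>z\<in>I x y. (-1) ^ rk x z * G_dual x z * G z y) < rk x y"
proof -
  have "2 * degree ((-1) ^ rk x z * G_dual x z * G z y) < rk x y" if "z \<in> I x y" for z
  proof -
    from that assms have z: "z \<in> S" "le x z" "le z y"
      by (auto simp: interval_def)
    have "degree ((-1) ^ rk x z * G_dual x z * G z y) \<le> degree (G_dual x z) + degree (G z y)"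
      by (cases "even (rk x z)") (simp_all add: degree_mult_le)
    moreover have "2 * (degree (G_dual x z) + degree (G z y)) < rk x z + rk z y"
      using assms z degree_G_dual_less[of x z] degree_G_poly_less[of z y] rank_refl
      by (cases "z = x"; cases "z = y") (auto simp: interval_refl G_poly_singleton
          graded_poset.G_poly_singleton[OF graded_poset_dual])
    ultimately show ?thesis
      using rank_add[OF assms(1) z(1) assms(2) z(2,3)] by simp
  qed
  then have "degree (\<Sum>z\<in>I x y. (-1) ^ rk x z * G_dual x z * G z y) \<le> (rk x y - 1) div 2"
    by (intro degree_sum_le finite_interval) fastforce
  then show ?thesis
    using rank_pos[OF assms] by linarith
qed

lemma sum_G_dual_G:
  assumes "x \<in> S" "y \<in> S" "le x y"
  shows "(\<Sum>z\<in>I x y. (-1) ^ rk x z * G_dual x z * G z y) = (if x = y then 1 else 0)"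
proof (cases "x = y")
  case True
  with assms show ?thesis
    by (simp add: interval_refl rank_refl G_poly_singleton graded_poset.G_poly_singleton[OF graded_poset_dual])
next
  case False
  with assms show ?thesis
    using reverse_poly_fixed_eq_0[OF reverse_sum_G_dual_G[OF assms] degree_sum_G_dual_G[OF assms False]]
    by simp
qed

end

lemma eulerian_poset_if_eulerian:
  assumes "eulerian S le"
  shows "eulerian_poset S le"
proof -
  interpret graded_poset S le
    using assms unfolding eulerian_def graded_poset_def by blast
  show ?thesis
  proof
    fix x y
    assume xy: "x \<in> S" "y \<in> S" "le x y"
    have "(-1::int) ^ rk x z = mobius S le x z" if "z \<in> I x y" for z
    proof -
      have "rho S le z = rho S le x + rk x z"
        using that xy pbot_least rank_add[of "pbot S le" x z] by (simp add: rho_eq_interval_rank interval_def)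
      with assms that xy show ?thesis
        by (simp add: eulerian_def interval_def)
    qed
    then have "(\<Sum>z\<in>I x y. (-1::int) ^ rk x z) = (\<Sum>z\<in>I x y. mobius S le x z)"
      by simp
    then show "(\<Sum>z\<in>I x y. (-1::int) ^ rk x z) = (if x = y then 1 else 0)"
      using xy sum_mobius_interval[OF xy] by (auto simp: interval_refl rank_refl)
  qed
qed

section \<open>Duality of the polynomial \<open>B\<close>\<close>

context graded_poset
begin

lemma unitriangular_solution_unique:
  fixes f g :: "'a \<Rightarrow> 'b::comm_ring_1"
  assumes "x \<in> S" "\<And>z. z \<in> S \<Longrightarrow> A z z = 1"
    and "\<And>y. y \<in> S \<Longrightarrow> le x y \<Longrightarrow> (\<Sum>z\<in>I x y. f z * A z y) = (\<Sum>z\<in>I x y. g z * A z y)"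
    and "y \<in> S" "le x y"
  shows "f y = g y"
  using assms(4,5)
proof (induction "card (I x y)" arbitrary: y rule: less_induct)
  case less
  have split: "(\<Sum>z\<in>I x y. h z * A z y) = h y + (\<Sum>z\<in>I x y - {y}. h z * A z y)" for h :: "'a \<Rightarrow> 'b"
    using less.prems assms(2) by (subst sum.remove[OF finite_interval top_in_interval]) simp_all
  have "f z = g z" if "z \<in> I x y - {y}" for z
  proof -
    have "card (I x z) < card (I x y)"
      using that less.prems assms(1) by (intro card_interval_less) (auto simp: interval_def poset_refl)
    with that show ?thesis
      by (intro less.hyps) (auto simp: interval_def)
  qed
  then show ?case
    using assms(3)[OF less.prems] unfolding split by simp
qed

lemma unitriangular_solution_unique_left:
  fixes f g :: "'a \<Rightarrow> 'b::comm_ring_1"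
  assumes "y \<in> S" "\<And>z. z \<in> S \<Longrightarrow> A z z = 1"
    and "\<And>x. x \<in> S \<Longrightarrow> le x y \<Longrightarrow> (\<Sum>z\<in>I x y. A x z * f z) = (\<Sum>z\<in>I x y. A x z * g z)"
    and "x \<in> S" "le x y"
  shows "f x = g x"
  using graded_poset.unitriangular_solution_unique[OF graded_poset_dual, of y "\<lambda>a b. A b a" f g x] assms
  by (simp add: interval_dual_rel dual_rel_apply mult.commute)

lemma B_val_dual_recursion:
  assumes "a \<in> S" "b \<in> S" "le a b"
  shows "(\<Sum>z\<in>I a b. (1 / u) ^ rk a z * ipoly (G_dual a z) (u * v) * B_val (I z b) (dual_rel le) (1 / u) v)
    = ipoly (G_dual a b) (v / u)"
  using graded_poset.B_val_recursion[OF graded_poset_dual, of b a "1 / u" v] assms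
  by (simp add: interval_dual_rel interval_rank_dual_rel dual_rel_apply mult.commute mult.left_commute)

end

context eulerian_poset
begin

lemma sum_G_dual_twisted_B_dual:
  fixes u v :: real
  assumes "u \<noteq> 0" "x \<in> S" "z \<in> S" "le x z"
  shows "(\<Sum>w\<in>I x z. (-1) ^ rk x w * ipoly (G_dual x w) (u * v)
      * ((-u) ^ rk w z * B_val (I w z) (dual_rel le) (1 / u) v))
    = (-u) ^ rk x z * ipoly (G_dual x z) (v / u)"
proof -
  have "(-1) ^ rk x w * (-u) ^ rk w z = (-u) ^ rk x z * (1 / u) ^ rk x w" if "w \<in> I x z" for w
  proof -
    have "rk x z = rk x w + rk w z"
      using that assms rank_add[of x w z] by (simp add: interval_def)
    then have "(-u) ^ rk x z * (1 / u) ^ rk x w = ((-u) * (1 / u)) ^ rk x w * (-u) ^ rk w z"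
      by (simp only: power_add power_mult_distrib mult_ac)
    moreover have "(-u) * (1 / u) = -1"
      using assms(1) by simp
    ultimately show ?thesis
      by simp
  qed
  then have "(\<Sum>w\<in>I x z. (-1) ^ rk x w * ipoly (G_dual x w) (u * v)
      * ((-u) ^ rk w z * B_val (I w z) (dual_rel le) (1 / u) v))
    = (-u) ^ rk x z * (\<Sum>w\<in>I x z. (1 / u) ^ rk x w * ipoly (G_dual x w) (u * v)
      * B_val (I w z) (dual_rel le) (1 / u) v)"
    unfolding sum_distrib_left by (intro sum.cong refl) (simp add: algebra_simps)
  then show ?thesis
    using B_val_dual_recursion[OF assms(2-4)] by simp
qed

lemma sum_G_dual_G_eval:
  assumes "x \<in> S" "y \<in> S" "le x y"
  shows "(\<Sum>w\<in>I x y. (-1) ^ rk x w * ipoly (G_dual x w) t * ipoly (G w y) t) = (if x = y then 1 else 0)"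
  using arg_cong[OF sum_G_dual_G[OF assms], of "\<lambda>p. ipoly p t"] by (simp add: mult.assoc)

lemma sum_G_dual_sum_twisted_B_dual:
  fixes u v :: real
  assumes "u \<noteq> 0" "x \<in> S" "y \<in> S" "le x y"
  shows "(\<Sum>w\<in>I x y. (-1) ^ rk x w * ipoly (G_dual x w) (u * v) * (\<Sum>z\<in>I w y.
      (-u) ^ rk w z * B_val (I w z) (dual_rel le) (1 / u) v * (u ^ rk z y * ipoly (G z y) (v / u))))
    = (if x = y then 1 else 0)"
proof -
  have "(\<Sum>w\<in>I x y. (-1) ^ rk x w * ipoly (G_dual x w) (u * v) * (\<Sum>z\<in>I w y.
      (-u) ^ rk w z * B_val (I w z) (dual_rel le) (1 / u) v * (u ^ rk z y * ipoly (G z y) (v / u))))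
    = (\<Sum>z\<in>I x y. (\<Sum>w\<in>I x z. (-1) ^ rk x w * ipoly (G_dual x w) (u * v)
      * ((-u) ^ rk w z * B_val (I w z) (dual_rel le) (1 / u) v)) * (u ^ rk z y * ipoly (G z y) (v / u)))"
    unfolding sum_distrib_left sum_distrib_right sum_interval_swap[OF assms(2,3)]
    by (simp add: mult.assoc)
  also have "\<dots> = (\<Sum>z\<in>I x y. (-u) ^ rk x z * u ^ rk z y * (ipoly (G_dual x z) (v / u) * ipoly (G z y) (v / u)))"
  proof (intro sum.cong refl)
    fix z
    assume "z \<in> I x y"
    with assms have "(\<Sum>w\<in>I x z. (-1) ^ rk x w * ipoly (G_dual x w) (u * v)
        * ((-u) ^ rk w z * B_val (I w z) (dual_rel le) (1 / u) v)) = (-u) ^ rk x z * ipoly (G_dual x z) (v / u)"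
      by (intro sum_G_dual_twisted_B_dual) (simp_all add: mem_interval)
    then show "(\<Sum>w\<in>I x z. (-1) ^ rk x w * ipoly (G_dual x w) (u * v)
        * ((-u) ^ rk w z * B_val (I w z) (dual_rel le) (1 / u) v)) * (u ^ rk z y * ipoly (G z y) (v / u))
      = (-u) ^ rk x z * u ^ rk z y * (ipoly (G_dual x z) (v / u) * ipoly (G z y) (v / u))"
      by (simp only: mult_ac)
  qed
  also have "\<dots> = u ^ rk x y * (\<Sum>z\<in>I x y. (-1) ^ rk x z * ipoly (G_dual x z) (v / u) * ipoly (G z y) (v / u))"
    unfolding sum_distrib_left
  proof (intro sum.cong refl)
    fix z
    assume "z \<in> I x y"
    then have "rk x y = rk x z + rk z y"
      using assms rank_add[of x z y] by (simp add: interval_def)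
    then show "(-u) ^ rk x z * u ^ rk z y * (ipoly (G_dual x z) (v / u) * ipoly (G z y) (v / u))
        = u ^ rk x y * ((-1) ^ rk x z * ipoly (G_dual x z) (v / u) * ipoly (G z y) (v / u))"
      by (simp add: power_add power_minus[of u] mult_ac)
  qed
  also have "\<dots> = (if x = y then 1 else 0)"
    using assms by (simp add: sum_G_dual_G_eval rank_refl)
  finally show ?thesis .
qed

lemma twisted_B_dual_recursion:
  fixes u v :: real
  assumes "u \<noteq> 0" "x \<in> S" "y \<in> S" "le x y"
  shows "(\<Sum>z\<in>I x y. (-u) ^ rk x z * B_val (I x z) (dual_rel le) (1 / u) v
      * (u ^ rk z y * ipoly (G z y) (v / u))) = ipoly (G x y) (u * v)"
proof (rule unitriangular_solution_unique_left[where A = "\<lambda>x w. (-1) ^ rk x w * ipoly (G_dual x w) (u * v)"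
      and f = "\<lambda>w. \<Sum>z\<in>I w y. (-u) ^ rk w z * B_val (I w z) (dual_rel le) (1 / u) v * (u ^ rk z y * ipoly (G z y) (v / u))"
      and g = "\<lambda>w. ipoly (G w y) (u * v)", OF assms(3) _ _ assms(2,4)])
  show "(-1) ^ rk z z * ipoly (G_dual z z) (u * v) = 1" if "z \<in> S" for z
    using that by (simp add: interval_refl rank_refl graded_poset.G_poly_singleton[OF graded_poset_dual])
  show "(\<Sum>w\<in>I x' y. (-1) ^ rk x' w * ipoly (G_dual x' w) (u * v) * (\<Sum>z\<in>I w y.
      (-u) ^ rk w z * B_val (I w z) (dual_rel le) (1 / u) v * (u ^ rk z y * ipoly (G z y) (v / u))))
    = (\<Sum>w\<in>I x' y. (-1) ^ rk x' w * ipoly (G_dual x' w) (u * v) * ipoly (G w y) (u * v))"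
    if "x' \<in> S" "le x' y" for x'
    by (simp only: sum_G_dual_sum_twisted_B_dual[OF assms(1) that(1) assms(3) that(2)]
        sum_G_dual_G_eval[OF that(1) assms(3) that(2)])
qed

theorem B_val_dual:
  fixes u v :: real
  assumes "u \<noteq> 0" "x \<in> S" "y \<in> S" "le x y"
  shows "B_val (I x y) le u v = (-u) ^ rk x y * B_val (I x y) (dual_rel le) (1 / u) v"
proof (rule unitriangular_solution_unique[where A = "\<lambda>z y. u ^ rk z y * ipoly (G z y) (v / u)"
      and f = "\<lambda>z. B_val (I x z) le u v" and g = "\<lambda>z. (-u) ^ rk x z * B_val (I x z) (dual_rel le) (1 / u) v",
      OF assms(2) _ _ assms(3,4)])
  show "u ^ rk z z * ipoly (G z z) (v / u) = 1" if "z \<in> S" for z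
    using that by (simp add: interval_refl rank_refl G_poly_singleton)
  show "(\<Sum>z\<in>I x y'. B_val (I x z) le u v * (u ^ rk z y' * ipoly (G z y') (v / u)))
      = (\<Sum>z\<in>I x y'. (-u) ^ rk x z * B_val (I x z) (dual_rel le) (1 / u) v * (u ^ rk z y' * ipoly (G z y') (v / u)))"
    if "y' \<in> S" "le x y'" for y'
    using B_val_recursion[OF assms(2) that] twisted_B_dual_recursion[OF assms(1,2) that]
    by (simp add: mult.assoc)
qed

end

theorem theorem2p13:
  fixes S :: "'a set" and le :: "'a \<Rightarrow> 'a \<Rightarrow> bool" and d :: nat
  assumes "eulerian S le"
    and "prank S le = d"
  shows "\<forall>u v :: real. u \<noteq> 0 \<longrightarrow>
           B_val S le u v = (- u) ^ d * B_val S (dual_rel le) (1 / u) v"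
proof (intro allI impI)
  fix u v :: real
  assume "u \<noteq> 0"
  interpret eulerian_poset S le
    using assms(1) by (rule eulerian_poset_if_eulerian)
  have "d = rk (pbot S le) (ptop S le)"
    using assms(2) by (simp add: prank_def rho_eq_interval_rank)
  then show "B_val S le u v = (- u) ^ d * B_val S (dual_rel le) (1 / u) v"
    using B_val_dual[OF \<open>u \<noteq> 0\<close> pbot_least(1) ptop_greatest(1) pbot_least(2)[OF ptop_greatest(1)]]
    by (simp add: interval_bot_top)
qed

end
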